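(* Let $S$ and $T$ be linear relations between two vector spaces $\mathcal{H}$ and $\mathcal{K}$ (i.e. linear subspaces of $\mathcal{H}\times\mathcal{K}$). Then the following three statements are equivalent: (i) $S\subset T$; (ii) $\ker S\subset \ker T$ and $\operatorname{ran} S\subset \operatorname{ran}(S\cap T)$; (iii) $\operatorname{ran} S\subset \operatorname{ran} T$ and $\ker(S\vee T)\subset \ker T$.
   Context: For a linear relation $R\subset \mathcal{H}\times\mathcal{K}$: $\operatorname{ran} R=\{k:(h,k)\in R \text{ for some } h\}$ and $\ker R=\{h:(h,0)\in R\}$. $S\cap T$ is the set-theoretic intersection of the subspaces $S,T$ (again a linear relation), and $S\vee T$ denotes the linear span of $S\cup T$ in $\mathcal{H}\times\mathcal{K}$. *)

theory Defs
  imports Complex_Main "HOL-Library.Product_Plus"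
begin

definition prod_scale ::
  "('f \<Rightarrow> 'a \<Rightarrow> 'a) \<Rightarrow> ('f \<Rightarrow> 'b \<Rightarrow> 'b) \<Rightarrow> 'f \<Rightarrow> 'a \<times> 'b \<Rightarrow> 'a \<times> 'b" where
  "prod_scale sH sK c p = (sH c (fst p), sK c (snd p))"

definition linear_relation ::
  "('f::field \<Rightarrow> 'a::ab_group_add \<Rightarrow> 'a) \<Rightarrow> ('f \<Rightarrow> 'b::ab_group_add \<Rightarrow> 'b) \<Rightarrow> ('a \<times> 'b) set \<Rightarrow> bool" where
  "linear_relation sH sK R = module.subspace (prod_scale sH sK) R"

definition ran_rel :: "('a \<times> 'b) set \<Rightarrow> 'b set" where
  "ran_rel R = {k. \<exists>h. (h, k) \<in> R}"

definition ker_rel :: "('a \<times> 'b::zero) set \<Rightarrow> 'a set" where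
  "ker_rel R = {h. (h, 0) \<in> R}"

definition sup_rel ::
  "('f::field \<Rightarrow> 'a::ab_group_add \<Rightarrow> 'a) \<Rightarrow> ('f \<Rightarrow> 'b::ab_group_add \<Rightarrow> 'b)
    \<Rightarrow> ('a \<times> 'b) set \<Rightarrow> ('a \<times> 'b) set \<Rightarrow> ('a \<times> 'b) set" where
  "sup_rel sH sK S T = module.span (prod_scale sH sK) (S \<union> T)"

end

theory Submission
  imports Defs
begin

text \<open>
  Both nontrivial implications rest on the same observation. Given \<open>(h, k) \<in> S\<close>, a hypothesis on
  ranges provides \<open>(h', k)\<close> in a relation contained in \<open>T\<close>; the difference \<open>(h - h', 0)\<close> lies in
  a subspace \<open>U\<close> containing both pairs, so \<open>h - h'\<close> belongs to \<open>ker U\<close>, and if \<open>ker U \<subseteq> ker T\<close>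
  then \<open>(h, k) = (h - h', 0) + (h', k) \<in> T\<close>. For (ii) take \<open>U = S\<close>, with \<open>h'\<close> from \<open>S \<inter> T\<close>; for
  (iii) take \<open>U = S \<or> T\<close>, with \<open>h'\<close> from \<open>T\<close>.
\<close>

lemma module_prod_scale:
  assumes "module sH" and "module sK"
  shows "module (prod_scale sH sK)"
proof -
  interpret H: module sH by fact
  interpret K: module sK by fact
  show ?thesis
    by unfold_locales
      (simp_all add: prod_scale_def H.scale_right_distrib K.scale_right_distrib
         H.scale_left_distrib K.scale_left_distrib)
qed

lemma subset_if_ran_subset_ker_subset:
  fixes s :: "'f::comm_ring_1 \<Rightarrow> 'a::ab_group_add \<times> 'b::ab_group_add \<Rightarrow> 'a \<times> 'b"
  assumes "module s"
    and "module.subspace s U" and "module.subspace s T"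
    and "S \<subseteq> U" and "R \<subseteq> U" and "R \<subseteq> T"
    and "ran_rel S \<subseteq> ran_rel R" and "ker_rel U \<subseteq> ker_rel T"
  shows "S \<subseteq> T"
proof
  interpret module s by fact
  fix p assume "p \<in> S"
  then obtain h k where p: "p = (h, k)" and hk: "(h, k) \<in> S"
    by (cases p) auto
  then have "k \<in> ran_rel R"
    using assms(7) by (auto simp: ran_rel_def)
  then obtain h' where h'k: "(h', k) \<in> R"
    by (auto simp: ran_rel_def)
  have "(h, k) - (h', k) \<in> U"
    using hk h'k assms(4,5) by (blast intro: subspace_diff[OF assms(2)])
  then have "h - h' \<in> ker_rel T"
    using assms(8) by (auto simp: ker_rel_def)
  then have "(h - h', 0) + (h', k) \<in> T"
    using h'k assms(6) subspace_add[OF assms(3)] by (auto simp: ker_rel_def simp del: add_Pair)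
  then show "p \<in> T"
    by (simp add: p)
qed

theorem proposition3p1:
  fixes sH :: "'f::field \<Rightarrow> 'a::ab_group_add \<Rightarrow> 'a"
    and sK :: "'f \<Rightarrow> 'b::ab_group_add \<Rightarrow> 'b"
    and S T :: "('a \<times> 'b) set"
  assumes "vector_space sH" and "vector_space sK"
    and "linear_relation sH sK S" and "linear_relation sH sK T"
  shows "(S \<subseteq> T \<longleftrightarrow> ker_rel S \<subseteq> ker_rel T \<and> ran_rel S \<subseteq> ran_rel (S \<inter> T))
       \<and> (S \<subseteq> T \<longleftrightarrow> ran_rel S \<subseteq> ran_rel T \<and> ker_rel (sup_rel sH sK S T) \<subseteq> ker_rel T)"
proof -
  have prod: "module (prod_scale sH sK)"
    using module_prod_scale[of sH sK] assms(1,2) by (simp add: module_iff_vector_space)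
  interpret P: module "prod_scale sH sK" by (fact prod)
  have S: "P.subspace S" and T: "P.subspace T"
    using assms(3,4) by (simp_all add: linear_relation_def)
  have sup: "P.subspace (sup_rel sH sK S T)" "S \<union> T \<subseteq> sup_rel sH sK S T"
    by (simp_all add: sup_rel_def P.subspace_span P.span_superset)
  have "sup_rel sH sK S T = T" if "S \<subseteq> T"
    using that T by (simp add: sup_rel_def Un_absorb1)
  moreover have "S \<subseteq> T" if "ker_rel S \<subseteq> ker_rel T" "ran_rel S \<subseteq> ran_rel (S \<inter> T)"
    using subset_if_ran_subset_ker_subset[OF prod S T, of S "S \<inter> T"] that by blast
  moreover have "S \<subseteq> T" if "ran_rel S \<subseteq> ran_rel T" "ker_rel (sup_rel sH sK S T) \<subseteq> ker_rel T"
    using subset_if_ran_subset_ker_subset[OF prod sup(1) T, of S T] sup(2) that by blast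
  ultimately show ?thesis
    by (auto simp: ker_rel_def ran_rel_def)
qed

end
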